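(* Let $T_1,T_2\in\mathcal{T}_n$ be binary phylogenetic trees. Let $G$ be the undirected multigraph with vertex set $\{1,\dots,2n-2\}$ and edge multiset $M(T_1)\sqcup M(T_2)$ (each member of $M(T_i)$ being a $2$-element set, viewed as an edge), and let $C$ be the set of connected components of $G$. Then $\mathit{TD}(T_1,T_2)=n-1-|C|$.
   Context: A phylogenetic tree is a finite rooted tree (arcs directed away from the root) with no node of outdegree $1$, whose leaves are injectively labeled; it is binary if every internal (non-leaf) node has exactly $2$ children. $\mathcal{T}_n$ denotes the set of phylogenetic trees with $n$ leaves labeled $1,\dots,n$, up to label-preserving isomorphism; $\mathcal{L}(T)$ is the set of leaves. The height of a node is the length of a longest directed path from it to a leaf. The bottom-up ordering of $T=(V,E)\in\mathcal{T}_n$ is the unique injective map $\ell:V\to\{1,\dots,|V|\}$ such that: (a) for a leaf $v$, $\ell(v)$ is its label; (b) if $\mathrm{height}(u)<\mathrm{height}(v)$ then $\ell(u)<\ell(v)$; (c) if $0<\mathrm{height}(u)=\mathrm{height}(v)$ and $\min\{\ell(x): x \text{ child of } u\}<\min\{\ell(x): x\text{ child of } v\}$ then $\ell(u)<\ell(v)$. The matching representation is $M(T)=\{\ell(\mathrm{children}(u)) : u\in V\setminus\mathcal{L}(T)\}$, a partition of $\{1,\dots,|V|-1\}$. For a subset $S=\{i_1<\dots<i_k\}$ with $k\ge 2$, $\kappa(S)$ is the cyclic permutation $(i_1,\dots,i_k)$. The matching permutation is $\pi(T)=\prod_{u\in V\setminus\mathcal{L}(T)}\kappa(\ell(\mathrm{children}(u)))$,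 regarded as an element of $\mathfrak{S}_{2n-2}$ fixing $|V|,\dots,2n-2$. Permutations are composed right to left. $\mathit{TD}'(T_1,T_2)$ is the least number of transpositions whose product is $\pi(T_2)^{-1}\pi(T_1)$ (zero if this is the identity), and the transposition distance is $\mathit{TD}(T_1,T_2)=\tfrac12\mathit{TD}'(T_1,T_2)$. *)

theory Defs
  imports Complex_Main "HOL-Combinatorics.Cycles"
begin

text \<open>Binary phylogenetic trees: a leaf carries its label; an internal node has exactly
two (unordered in meaning) children.  Nodes of a tree are identified with its subtrees,
which are pairwise distinct since leaf labels are distinct.\<close>

datatype btree = Leaf nat | Node btree btree

fun leaves :: "btree \<Rightarrow> nat list" where
  "leaves (Leaf a) = [a]"
| "leaves (Node l r) = leaves l @ leaves r"

fun subtrees :: "btree \<Rightarrow> btree set" where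
  "subtrees (Leaf a) = {Leaf a}"
| "subtrees (Node l r) = insert (Node l r) (subtrees l \<union> subtrees r)"

fun children :: "btree \<Rightarrow> btree set" where
  "children (Leaf a) = {}"
| "children (Node l r) = {l, r}"

fun is_leaf :: "btree \<Rightarrow> bool" where
  "is_leaf (Leaf a) = True"
| "is_leaf (Node l r) = False"

fun height :: "btree \<Rightarrow> nat" where
  "height (Leaf a) = 0"
| "height (Node l r) = Suc (max (height l) (height r))"

definition binary_phylo :: "nat \<Rightarrow> btree \<Rightarrow> bool" where
  "binary_phylo n T \<longleftrightarrow> distinct (leaves T) \<and> set (leaves T) = {1..n}"

text \<open>The defining properties (a)-(c) of the bottom-up ordering; the map is
normalised to 0 outside the node set so that it is unique as a total function.\<close>
definition is_bottom_up :: "btree \<Rightarrow> (btree \<Rightarrow> nat) \<Rightarrow> bool" where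
  "is_bottom_up T lab \<longleftrightarrow>
     inj_on lab (subtrees T) \<and> lab ` subtrees T \<subseteq> {1..card (subtrees T)} \<and>
     (\<forall>x. x \<notin> subtrees T \<longrightarrow> lab x = 0) \<and>
     (\<forall>a. Leaf a \<in> subtrees T \<longrightarrow> lab (Leaf a) = a) \<and>
     (\<forall>u\<in>subtrees T. \<forall>v\<in>subtrees T. height u < height v \<longrightarrow> lab u < lab v) \<and>
     (\<forall>u\<in>subtrees T. \<forall>v\<in>subtrees T.
        0 < height u \<and> height u = height v \<and>
        Min (lab ` children u) < Min (lab ` children v) \<longrightarrow> lab u < lab v)"

definition bottom_up :: "btree \<Rightarrow> btree \<Rightarrow> nat" where
  "bottom_up T = (THE lab. is_bottom_up T lab)"

definition matching :: "btree \<Rightarrow> nat set set" where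
  "matching T = {bottom_up T ` children u | u. u \<in> subtrees T \<and> \<not> is_leaf u}"

definition kappa :: "nat set \<Rightarrow> nat \<Rightarrow> nat" where
  "kappa S = cycle_of_list (sorted_list_of_set S)"

definition matching_perm :: "btree \<Rightarrow> nat \<Rightarrow> nat" where
  "matching_perm T = Finite_Set.fold (\<lambda>S p. kappa S \<circ> p) id (matching T)"

text \<open>TD': least number of transpositions of S_{2n-2} whose product is
pi(T2)^{-1} pi(T1) (composition right to left).\<close>
definition TD' :: "nat \<Rightarrow> btree \<Rightarrow> btree \<Rightarrow> nat" where
  "TD' n T1 T2 = (LEAST k. \<exists>ts :: (nat \<Rightarrow> nat) list. length ts = k \<and>
      (\<forall>t\<in>set ts. \<exists>a b. a \<noteq> b \<and> a \<in> {1..2*n-2} \<and> b \<in> {1..2*n-2} \<and> t = transpose a b) \<and>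
      foldr (\<circ>) ts id = inv (matching_perm T2) \<circ> matching_perm T1)"

definition TD :: "nat \<Rightarrow> btree \<Rightarrow> btree \<Rightarrow> real" where
  "TD n T1 T2 = real (TD' n T1 T2) / 2"

text \<open>Connected components of the multigraph on {1..2n-2} with edge multiset
M(T1) + M(T2); edge multiplicities do not affect connectivity.\<close>
definition graph_edges :: "btree \<Rightarrow> btree \<Rightarrow> nat rel" where
  "graph_edges T1 T2 = {(x, y). \<exists>e \<in> matching T1 \<union> matching T2. x \<in> e \<and> y \<in> e}"

definition components :: "nat \<Rightarrow> btree \<Rightarrow> btree \<Rightarrow> nat set set" where
  "components n T1 T2 = {(graph_edges T1 T2)\<^sup>* `` {x} | x. x \<in> {1..2*n-2}}"

end

theory Submission
  imports Defs "HOL-Library.List_Lexorder"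
begin

text \<open>
  The matching permutations of T1 and T2 are fixed-point-free involutions s1, s2 of
  V = {1..2n-2}, and the components of G are the classes of the graph joining every x to
  s1 x and s2 x. If s2 \<circ> s1 is a product of k transpositions, every z is joined to s2 (s1 z)
  by the transposed pairs, which form a graph with at least |V| - k classes; each component
  of G meets at most two of them (those of x and s1 x), so k \<ge> |V| - 2|C|. Conversely,
  rewiring s2 at points where it disagrees with s1 reaches s1 using two transpositions per
  new component, so k = |V| - 2|C| can be attained.
\<close>

section \<open>Transpositions between fixed-point-free involutions\<close>

definition reach_classes :: "'a rel \<Rightarrow> 'a set \<Rightarrow> 'a set set" where
  "reach_classes R V = {R\<^sup>* `` {x} | x. x \<in> V}"

lemma reach_class_eq:
  assumes "sym R" "(x, y) \<in> R\<^sup>*"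
  shows "R\<^sup>* `` {x} = R\<^sup>* `` {y}"
proof -
  have "(y, x) \<in> R\<^sup>*"
    using assms sym_rtrancl by (metis symD)
  then show ?thesis
    using assms(2) by (auto intro: rtrancl_trans)
qed

lemma finite_reach_classes: "finite V \<Longrightarrow> finite (reach_classes R V)"
  unfolding reach_classes_def by (simp add: Setcompr_eq_image)

lemma card_reach_classes_empty: "card (reach_classes {} V) = card V"
proof -
  have "reach_classes {} V = (\<lambda>x. {x}) ` V"
    unfolding reach_classes_def by auto
  then show ?thesis
    by (simp add: card_image)
qed

lemma card_reach_classes_insert_edge:
  assumes "sym R" "a \<in> V" "b \<in> V" "finite V"
  shows "card (reach_classes R V) \<le> card (reach_classes (insert (a, b) (insert (b, a) R)) V) + 1"
proof -
  define R' where "R' = insert (a, b) (insert (b, a) R)"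
  define A where "A = R\<^sup>* `` {a}"
  define B where "B = R\<^sup>* `` {b}"
  have class_a: "R\<^sup>* `` {x} = A" if "(x, a) \<in> R\<^sup>*" for x
    using reach_class_eq[OF \<open>sym R\<close> that] unfolding A_def .
  have class_b: "R\<^sup>* `` {x} = B" if "(x, b) \<in> R\<^sup>*" for x
    using reach_class_eq[OF \<open>sym R\<close> that] unfolding B_def .
  have unchanged: "R\<^sup>* `` {x} \<in> reach_classes R' V"
    if "x \<in> V" "R\<^sup>* `` {x} \<notin> {A, B}" for x
  proof -
    have "(x, a) \<notin> R\<^sup>*" "(x, b) \<notin> R\<^sup>*"
      using that class_a class_b by auto
    then have "R'\<^sup>* `` {x} = R\<^sup>* `` {x}"
      unfolding R'_def by (auto simp: rtrancl_insert)
    then show ?thesis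
      using that(1) unfolding reach_classes_def by auto
  qed
  have new: "R'\<^sup>* `` {a} \<notin> reach_classes R V - {A, B}"
    using class_a unfolding reach_classes_def by auto
  have "R'\<^sup>* `` {a} \<in> reach_classes R' V"
    using \<open>a \<in> V\<close> unfolding reach_classes_def by auto
  then have "insert (R'\<^sup>* `` {a}) (reach_classes R V - {A, B}) \<subseteq> reach_classes R' V"
    using unchanged unfolding reach_classes_def by auto
  then have "card (reach_classes R V - {A, B}) + 1 \<le> card (reach_classes R' V)"
    using new card_mono[OF finite_reach_classes[OF \<open>finite V\<close>]]
    by (metis Suc_eq_plus1 card_insert_disjoint finite_Diff finite_reach_classes \<open>finite V\<close>)
  moreover have "card (reach_classes R V) - card {A, B} \<le> card (reach_classes R V - {A, B})"
    by (rule diff_card_le_card_Diff) simp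
  moreover have "card {A, B} \<le> 2"
    by (cases "A = B") auto
  ultimately show ?thesis
    unfolding R'_def by linarith
qed

lemma card_reach_classes_less:
  assumes "finite V" "sym G" "H \<subseteq> G\<^sup>*" "a \<in> V" "c \<in> V"
    and "(a, c) \<in> G\<^sup>*" "(a, c) \<notin> H\<^sup>*"
  shows "card (reach_classes G V) < card (reach_classes H V)"
proof -
  define coarsen where "coarsen K = G\<^sup>* `` K" for K
  have "H\<^sup>* \<subseteq> G\<^sup>*"
    using assms(3) by (rule rtrancl_subset_rtrancl)
  then have coarsen_class: "coarsen (H\<^sup>* `` {x}) = G\<^sup>* `` {x}" for x
    unfolding coarsen_def by (auto intro: rtrancl_trans)
  then have image: "coarsen ` reach_classes H V = reach_classes G V"
    unfolding reach_classes_def by (auto simp: image_iff)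
  have "H\<^sup>* `` {a} \<noteq> H\<^sup>* `` {c}"
    using assms(7) by auto
  moreover have "coarsen (H\<^sup>* `` {a}) = coarsen (H\<^sup>* `` {c})"
    unfolding coarsen_class using reach_class_eq[OF assms(2,6)] .
  ultimately have "\<not> inj_on coarsen (reach_classes H V)"
    using assms(4,5) unfolding reach_classes_def inj_on_def by blast
  then have "card (coarsen ` reach_classes H V) \<noteq> card (reach_classes H V)"
    using eq_card_imp_inj_on finite_reach_classes[OF assms(1)] by blast
  moreover have "card (coarsen ` reach_classes H V) \<le> card (reach_classes H V)"
    using finite_reach_classes[OF assms(1)] by (rule card_image_le)
  ultimately show ?thesis
    unfolding image by simp
qed

definition transpositions_on :: "'a set \<Rightarrow> ('a \<Rightarrow> 'a) list \<Rightarrow> bool" where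
  "transpositions_on V ts \<longleftrightarrow> (\<forall>t\<in>set ts. \<exists>a b. a \<noteq> b \<and> a \<in> V \<and> b \<in> V \<and> t = transpose a b)"

definition moved_pairs :: "('a \<Rightarrow> 'a) list \<Rightarrow> 'a rel" where
  "moved_pairs ts = {(x, y). \<exists>t\<in>set ts. y = t x \<and> y \<noteq> x}"

lemma moved_pairs_Cons_transpose:
  assumes "a \<noteq> b"
  shows "moved_pairs (transpose a b # ts) = insert (a, b) (insert (b, a) (moved_pairs ts))"
  using assms unfolding moved_pairs_def by (auto simp: transpose_eq_iff)

lemma sym_moved_pairs:
  assumes "transpositions_on V ts"
  shows "sym (moved_pairs ts)"
proof (rule symI)
  fix x y
  assume "(x, y) \<in> moved_pairs ts"
  then obtain t where t: "t \<in> set ts" "y = t x" "y \<noteq> x"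
    unfolding moved_pairs_def by auto
  moreover have "t (t x) = x"
    using assms t(1) unfolding transpositions_on_def by auto
  ultimately have "x = t y" "x \<noteq> y"
    by auto
  with t(1) show "(y, x) \<in> moved_pairs ts"
    unfolding moved_pairs_def by blast
qed

lemma card_le_reach_classes_moved_pairs:
  assumes "finite V" "transpositions_on V ts"
  shows "card V \<le> card (reach_classes (moved_pairs ts) V) + length ts"
  using assms(2)
proof (induction ts)
  case Nil
  then show ?case
    by (simp add: moved_pairs_def card_reach_classes_empty)
next
  case (Cons t ts)
  then obtain a b where ab: "a \<noteq> b" "a \<in> V" "b \<in> V" "t = transpose a b"
    unfolding transpositions_on_def by auto
  have ts: "transpositions_on V ts"
    using Cons.prems unfolding transpositions_on_def by simp
  have "card (reach_classes (moved_pairs ts) V) \<le> card (reach_classes (moved_pairs (t # ts)) V) + 1"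
    using card_reach_classes_insert_edge[OF sym_moved_pairs[OF ts] ab(2,3) \<open>finite V\<close>]
    by (simp add: ab(4) moved_pairs_Cons_transpose[OF ab(1)])
  then show ?case
    using Cons.IH[OF ts] by simp
qed

lemma foldr_comp_in_moved_pairs: "(x, foldr (\<circ>) ts id x) \<in> (moved_pairs ts)\<^sup>*"
proof (induction ts)
  case Nil
  then show ?case by simp
next
  case (Cons t ts)
  let ?y = "foldr (\<circ>) ts id x"
  have "(x, ?y) \<in> (moved_pairs (t # ts))\<^sup>*"
  proof -
    have "moved_pairs ts \<subseteq> moved_pairs (t # ts)"
      unfolding moved_pairs_def by auto
    then show ?thesis
      using Cons.IH rtrancl_mono by blast
  qed
  moreover have "(?y, t ?y) \<in> (moved_pairs (t # ts))\<^sup>="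
    unfolding moved_pairs_def by auto
  ultimately have "(x, t ?y) \<in> (moved_pairs (t # ts))\<^sup>*"
    by (auto intro: rtrancl_into_rtrancl)
  moreover have "foldr (\<circ>) (t # ts) id x = t ?y"
    by simp
  ultimately show ?case
    by (simp only:)
qed

definition fpf_involution_on :: "'a set \<Rightarrow> ('a \<Rightarrow> 'a) \<Rightarrow> bool" where
  "fpf_involution_on V s \<longleftrightarrow>
     (\<forall>x. s (s x) = x) \<and> (\<forall>x\<in>V. s x \<noteq> x \<and> s x \<in> V) \<and> (\<forall>x. x \<notin> V \<longrightarrow> s x = x)"

lemma fpf_involution_onD:
  assumes "fpf_involution_on V s"
  shows "s (s x) = x" "x \<in> V \<Longrightarrow> s x \<noteq> x" "x \<in> V \<Longrightarrow> s x \<in> V" "x \<notin> V \<Longrightarrow> s x = x"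
  using assms unfolding fpf_involution_on_def by auto

lemma fpf_involution_on_inj_eq:
  assumes "fpf_involution_on V s"
  shows "s x = s y \<longleftrightarrow> x = y"
  using fpf_involution_onD(1)[OF assms] by metis

lemma fpf_involution_on_distinct:
  assumes "fpf_involution_on V s" "a \<in> V" "b \<in> V" "a \<noteq> b" "s a \<noteq> b"
  shows "distinct [a, b, s a, s b]"
  using assms fpf_involution_onD[OF assms(1)] by (metis distinct_length_2_or_more distinct_singleton)

definition involution_graph :: "'a set \<Rightarrow> ('a \<Rightarrow> 'a) \<Rightarrow> ('a \<Rightarrow> 'a) \<Rightarrow> 'a rel" where
  "involution_graph V s1 s2 = {(x, y). x \<in> V \<and> (y = s1 x \<or> y = s2 x)}"

lemma sym_involution_graph:
  assumes "fpf_involution_on V s1" "fpf_involution_on V s2"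
  shows "sym (involution_graph V s1 s2)"
  using fpf_involution_onD[OF assms(1)] fpf_involution_onD[OF assms(2)]
  unfolding involution_graph_def by (auto intro: symI)

lemma involution_graph_rtrancl_subset:
  assumes "fpf_involution_on V s1" "fpf_involution_on V s2" "x \<in> V"
  shows "(involution_graph V s1 s2)\<^sup>* `` {x} \<subseteq> V"
proof
  fix y
  assume "y \<in> (involution_graph V s1 s2)\<^sup>* `` {x}"
  then have "(x, y) \<in> (involution_graph V s1 s2)\<^sup>*"
    by simp
  then show "y \<in> V"
    by induction
      (use assms fpf_involution_onD[OF assms(1)] fpf_involution_onD[OF assms(2)]
        in \<open>auto simp: involution_graph_def\<close>)
qed

lemma two_mul_card_reach_classes_involution_graph_le:
  assumes "finite V" "fpf_involution_on V s1" "fpf_involution_on V s2"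
  shows "2 * card (reach_classes (involution_graph V s1 s2) V) \<le> card V"
proof -
  let ?G = "involution_graph V s1 s2"
  let ?C = "reach_classes ?G V"
  have subset: "K \<subseteq> V" if "K \<in> ?C" for K
    using that involution_graph_rtrancl_subset[OF assms(2,3)] unfolding reach_classes_def by auto
  then have finite: "finite K" if "K \<in> ?C" for K
    using that \<open>finite V\<close> finite_subset by blast
  have disjoint: "pairwise disjnt ?C"
    using reach_class_eq[OF sym_involution_graph[OF assms(2,3)]]
    unfolding reach_classes_def pairwise_def disjnt_def by blast
  have "2 \<le> card K" if K: "K \<in> ?C" for K
  proof -
    obtain x where x: "x \<in> V" "K = ?G\<^sup>* `` {x}"
      using K unfolding reach_classes_def by auto
    then have "{x, s1 x} \<subseteq> K"
      unfolding involution_graph_def by auto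
    moreover have "card {x, s1 x} = 2"
      using fpf_involution_onD(2)[OF assms(2) x(1)] by auto
    ultimately show ?thesis
      using finite[OF K] by (metis card_mono)
  qed
  then have "2 * card ?C \<le> sum card ?C"
    using sum_bounded_below[of ?C 2 card] by (simp add: mult.commute)
  also have "\<dots> = card (\<Union>?C)"
    using card_Union_disjoint[OF disjoint finite] by simp
  also have "\<dots> \<le> card V"
    using subset \<open>finite V\<close> by (intro card_mono) auto
  finally show ?thesis .
qed

lemma reach_class_pair_invariant:
  assumes "fpf_involution_on V s1" "fpf_involution_on V s2" "sym R"
    and "\<And>z. (z, s2 (s1 z)) \<in> R\<^sup>*"
    and "(x, y) \<in> (involution_graph V s1 s2)\<^sup>*"
  shows "{R\<^sup>* `` {y}, R\<^sup>* `` {s1 y}} = {R\<^sup>* `` {x}, R\<^sup>* `` {s1 x}}"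
  using assms(5)
proof induction
  case base
  then show ?case by simp
next
  case (step y z)
  note s1 = fpf_involution_onD[OF assms(1)] and s2 = fpf_involution_onD[OF assms(2)]
  from step.hyps(2) consider "z = s1 y" | "z = s2 y"
    unfolding involution_graph_def by auto
  then show ?case
  proof cases
    case 1
    then show ?thesis
      using step.IH s1(1) by (simp add: insert_commute)
  next
    case 2
    have "(s1 y, z) \<in> R\<^sup>*"
      using assms(4)[of "s1 y"] s1(1) 2 by simp
    then have "R\<^sup>* `` {s1 y} = R\<^sup>* `` {z}"
      by (rule reach_class_eq[OF assms(3)])
    moreover have "(s1 z, y) \<in> R\<^sup>*"
      using assms(4)[of "s1 z"] s1(1) s2(1) 2 by simp
    then have "R\<^sup>* `` {s1 z} = R\<^sup>* `` {y}"
      by (rule reach_class_eq[OF assms(3)])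
    ultimately have "{R\<^sup>* `` {z}, R\<^sup>* `` {s1 z}} = {R\<^sup>* `` {s1 y}, R\<^sup>* `` {y}}"
      by simp
    also have "\<dots> = {R\<^sup>* `` {x}, R\<^sup>* `` {s1 x}}"
      using step.IH by (simp add: insert_commute)
    finally show ?thesis .
  qed
qed

lemma card_reach_classes_le_two_mul:
  assumes "finite V" "fpf_involution_on V s1" "fpf_involution_on V s2" "sym R"
    and "\<And>z. (z, s2 (s1 z)) \<in> R\<^sup>*"
  shows "card (reach_classes R V) \<le> 2 * card (reach_classes (involution_graph V s1 s2) V)"
proof -
  let ?G = "involution_graph V s1 s2"
  let ?C = "reach_classes ?G V"
  define F where "F K = (\<lambda>y. R\<^sup>* `` {y}) ` K" for K
  have "reach_classes R V \<subseteq> (\<Union>K\<in>?C. F K)"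
    unfolding reach_classes_def F_def by blast
  moreover have F_small: "finite (F K) \<and> card (F K) \<le> 2" if K: "K \<in> ?C" for K
  proof -
    obtain x where x: "K = ?G\<^sup>* `` {x}"
      using K unfolding reach_classes_def by auto
    have "R\<^sup>* `` {y} \<in> {R\<^sup>* `` {x}, R\<^sup>* `` {s1 x}}" if "y \<in> K" for y
    proof -
      have "{R\<^sup>* `` {y}, R\<^sup>* `` {s1 y}} = {R\<^sup>* `` {x}, R\<^sup>* `` {s1 x}}"
        by (rule reach_class_pair_invariant[OF assms(2-5)]) (use that x in simp)
      then show ?thesis
        by (metis insertI1)
    qed
    then have "F K \<subseteq> {R\<^sup>* `` {x}, R\<^sup>* `` {s1 x}}"
      unfolding F_def by blast
    moreover have "card {R\<^sup>* `` {x}, R\<^sup>* `` {s1 x}} \<le> 2"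
      by (simp add: card_insert_if)
    ultimately show ?thesis
      using card_mono[of "{R\<^sup>* `` {x}, R\<^sup>* `` {s1 x}}" "F K"] finite_subset by fastforce
  qed
  ultimately have "card (reach_classes R V) \<le> card (\<Union>K\<in>?C. F K)"
    using finite_reach_classes[OF \<open>finite V\<close>] by (intro card_mono) auto
  also have "\<dots> \<le> (\<Sum>K\<in>?C. card (F K))"
    using finite_reach_classes[OF \<open>finite V\<close>] by (rule card_UN_le)
  also have "\<dots> \<le> 2 * card ?C"
    using sum_bounded_above[of ?C "\<lambda>K. card (F K)" 2] F_small by (simp add: mult.commute)
  finally show ?thesis .
qed

lemma transpositions_lower_bound:
  assumes "finite V" "fpf_involution_on V s1" "fpf_involution_on V s2"
    and "transpositions_on V ts" "foldr (\<circ>) ts id = s2 \<circ> s1"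
  shows "card V \<le> 2 * card (reach_classes (involution_graph V s1 s2) V) + length ts"
proof -
  have "(z, s2 (s1 z)) \<in> (moved_pairs ts)\<^sup>*" for z
    using foldr_comp_in_moved_pairs[of z ts] assms(5) by simp
  then have "card (reach_classes (moved_pairs ts) V)
      \<le> 2 * card (reach_classes (involution_graph V s1 s2) V)"
    by (rule card_reach_classes_le_two_mul[OF assms(1-3) sym_moved_pairs[OF assms(4)]])
  then show ?thesis
    using card_le_reach_classes_moved_pairs[OF assms(1,4)] by linarith
qed

definition rewire :: "('a \<Rightarrow> 'a) \<Rightarrow> 'a \<Rightarrow> 'a \<Rightarrow> 'a \<Rightarrow> 'a" where
  "rewire s a b = transpose b (s a) \<circ> transpose a (s b) \<circ> s"

lemma rewire_apply:
  assumes "fpf_involution_on V s" "a \<in> V" "b \<in> V" "a \<noteq> b" "s a \<noteq> b"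
  shows "rewire s a b x =
    (if x = a then b else if x = b then a else if x = s a then s b else if x = s b then s a else s x)"
  using fpf_involution_on_distinct[OF assms] fpf_involution_onD(1)[OF assms(1)]
    fpf_involution_on_inj_eq[OF assms(1)]
  unfolding rewire_def by (auto simp: transpose_def)

lemma comp_rewire: "transpose a (s b) \<circ> transpose b (s a) \<circ> rewire s a b = s"
  by (simp add: rewire_def fun_eq_iff)

lemma foldr_comp_rewire:
  assumes "foldr (\<circ>) ts id = rewire s a b \<circ> p"
  shows "foldr (\<circ>) (transpose a (s b) # transpose b (s a) # ts) id = s \<circ> p"
proof -
  have "foldr (\<circ>) (transpose a (s b) # transpose b (s a) # ts) id
      = (transpose a (s b) \<circ> transpose b (s a) \<circ> rewire s a b) \<circ> p"
    using assms by (simp add: comp_assoc)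
  then show ?thesis
    unfolding comp_rewire .
qed

lemma fpf_involution_on_rewire:
  assumes "fpf_involution_on V s" "a \<in> V" "b \<in> V" "a \<noteq> b" "s a \<noteq> b"
  shows "fpf_involution_on V (rewire s a b)"
  using fpf_involution_on_distinct[OF assms] fpf_involution_onD[OF assms(1)] assms(2,3)
    fpf_involution_on_inj_eq[OF assms(1)]
  unfolding fpf_involution_on_def rewire_apply[OF assms] by auto

text \<open>
  Rewiring s2 at a point a where it disagrees with s1 costs two transpositions, makes s2
  agree with s1 on a and s1 a, and cuts {a, s1 a} off as a new component.
\<close>

context
  fixes V :: "'a set" and s1 s2 :: "'a \<Rightarrow> 'a" and a :: 'a
  assumes s1: "fpf_involution_on V s1" and s2: "fpf_involution_on V s2"
    and a: "a \<in> V" "s1 a \<noteq> s2 a"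
begin

private lemma rewire_conditions: "s1 a \<in> V" "a \<noteq> s1 a" "s2 a \<noteq> s1 a"
  using fpf_involution_onD(2,3)[OF s1 a(1)] a(2) by auto

lemma transpositions_on_rewire_Cons:
  "transpositions_on V ts \<Longrightarrow>
    transpositions_on V (transpose a (s2 (s1 a)) # transpose (s1 a) (s2 a) # ts)"
  using fpf_involution_on_distinct[OF s2 a(1) rewire_conditions] a(1) rewire_conditions(1)
    fpf_involution_onD(3)[OF s2]
  unfolding transpositions_on_def by auto

lemma disagreements_rewire_psubset:
  "{x \<in> V. s1 x \<noteq> rewire s2 a (s1 a) x} \<subset> {x \<in> V. s1 x \<noteq> s2 x}"
proof -
  note rew = rewire_apply[OF s2 a(1) rewire_conditions]
  note s1_facts = fpf_involution_onD[OF s1] and s2_facts = fpf_involution_onD[OF s2]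
  have disagree: "s1 x \<noteq> s2 x" if "s1 x \<noteq> rewire s2 a (s1 a) x" for x
  proof -
    consider "x = a" | "x = s1 a" | "x = s2 a" | "x = s2 (s1 a)"
      | "x \<notin> {a, s1 a, s2 a, s2 (s1 a)}"
      by blast
    then show ?thesis
    proof cases
      case 3
      then show ?thesis
        using s1_facts(1) s2_facts(1) a(2) by metis
    next
      case 4
      then show ?thesis
        using s2_facts(1) fpf_involution_on_inj_eq[OF s1] a(2) by metis
    qed (use that rew s1_facts(1) rewire_conditions(2) in auto)
  qed
  have "rewire s2 a (s1 a) a = s1 a"
    using rew by simp
  then have "a \<in> {x \<in> V. s1 x \<noteq> s2 x} - {x \<in> V. s1 x \<noteq> rewire s2 a (s1 a) x}"
    using a by simp
  with disagree show ?thesis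
    by auto
qed

lemma involution_graph_rewire_subset:
  "involution_graph V s1 (rewire s2 a (s1 a)) \<subseteq> (involution_graph V s1 s2)\<^sup>*"
proof
  let ?G = "involution_graph V s1 s2"
  have s1_edge: "(x, s1 x) \<in> ?G\<^sup>*" and s2_edge: "(x, s2 x) \<in> ?G\<^sup>*" if "x \<in> V" for x
    using that unfolding involution_graph_def by auto
  note s1_facts = fpf_involution_onD[OF s1] and s2_facts = fpf_involution_onD[OF s2]
  fix p
  assume "p \<in> involution_graph V s1 (rewire s2 a (s1 a))"
  then obtain x y where p: "p = (x, y)" "x \<in> V" "y = s1 x \<or> y = rewire s2 a (s1 a) x"
    unfolding involution_graph_def by auto
  then consider "y = s1 x" | "x = s1 a" "y = a" | "x = s2 a" "y = s2 (s1 a)"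
    | "x = s2 (s1 a)" "y = s2 a" | "y = s2 x"
    unfolding rewire_apply[OF s2 a(1) rewire_conditions] by (auto split: if_splits)
  then show "p \<in> ?G\<^sup>*"
  proof cases
    case 2
    then show ?thesis
      using p s1_edge[of "s1 a"] s1_facts(1) rewire_conditions(1) by simp
  next
    case 3
    then show ?thesis
      using p s2_edge[of "s2 a"] s1_edge[of a] s2_edge[of "s1 a"] a(1) rewire_conditions(1)
        s2_facts(1,3) by (metis rtrancl_trans)
  next
    case 4
    then show ?thesis
      using p s2_edge[of "s2 (s1 a)"] s1_edge[of "s1 a"] s2_edge[of a] a(1) rewire_conditions(1)
        s1_facts(1) s2_facts(1,3) by (metis rtrancl_trans)
  qed (use p s1_edge s2_edge in auto)
qed

lemma not_rtrancl_involution_graph_rewire: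
  "(a, s2 a) \<notin> (involution_graph V s1 (rewire s2 a (s1 a)))\<^sup>*"
proof
  assume "(a, s2 a) \<in> (involution_graph V s1 (rewire s2 a (s1 a)))\<^sup>*"
  then have "s2 a \<in> {a, s1 a}"
  proof induction
    case (step y z)
    have "rewire s2 a (s1 a) a = s1 a" "rewire s2 a (s1 a) (s1 a) = a"
      using rewire_apply[OF s2 a(1) rewire_conditions] rewire_conditions(2) by auto
    then show ?case
      using step fpf_involution_onD(1)[OF s1] unfolding involution_graph_def by auto
  qed simp
  then show False
    using fpf_involution_onD[OF s2] a by auto
qed

lemma card_reach_classes_less_rewire:
  assumes "finite V"
  shows "card (reach_classes (involution_graph V s1 s2) V)
    < card (reach_classes (involution_graph V s1 (rewire s2 a (s1 a))) V)"
proof (rule card_reach_classes_less[OF assms sym_involution_graph[OF s1 s2]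
      involution_graph_rewire_subset a(1) _ _ not_rtrancl_involution_graph_rewire])
  show "s2 a \<in> V"
    using fpf_involution_onD(3)[OF s2 a(1)] .
  show "(a, s2 a) \<in> (involution_graph V s1 s2)\<^sup>*"
    using a(1) unfolding involution_graph_def by auto
qed

end

lemma transpositions_upper_bound:
  assumes "finite V" "fpf_involution_on V s1" "fpf_involution_on V s2"
  shows "\<exists>ts. transpositions_on V ts \<and> foldr (\<circ>) ts id = s2 \<circ> s1 \<and>
    length ts + 2 * card (reach_classes (involution_graph V s1 s2) V) \<le> card V"
  using assms(3)
proof (induction "card {x \<in> V. s1 x \<noteq> s2 x}" arbitrary: s2 rule: less_induct)
  case less
  note s1 = fpf_involution_onD[OF assms(2)] and s2 = fpf_involution_onD[OF less.prems]
  show ?case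
  proof (cases "\<exists>a\<in>V. s1 a \<noteq> s2 a")
    case False
    then have "s2 = s1"
      using s1(4) s2(4) by (metis ext)
    then have "foldr (\<circ>) [] id = s2 \<circ> s1"
      using s1(1) by (simp add: fun_eq_iff)
    then show ?thesis
      using two_mul_card_reach_classes_involution_graph_le[OF assms(1,2) less.prems]
      by (intro exI[of _ "[]"]) (simp add: transpositions_on_def)
  next
    case True
    then obtain a where a: "a \<in> V" "s1 a \<noteq> s2 a"
      by blast
    define s2' where "s2' = rewire s2 a (s1 a)"
    have s2': "fpf_involution_on V s2'"
      unfolding s2'_def using a s1(2,3)[OF a(1)] by (intro fpf_involution_on_rewire[OF less.prems]) auto
    have "card {x \<in> V. s1 x \<noteq> s2' x} < card {x \<in> V. s1 x \<noteq> s2 x}"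
      unfolding s2'_def using assms(1)
      by (intro psubset_card_mono disagreements_rewire_psubset[OF assms(2) less.prems a]) simp
    then obtain ts where ts: "transpositions_on V ts" "foldr (\<circ>) ts id = s2' \<circ> s1"
      "length ts + 2 * card (reach_classes (involution_graph V s1 s2') V) \<le> card V"
      using less.hyps s2' by blast
    show ?thesis
    proof (intro exI conjI)
      show "transpositions_on V (transpose a (s2 (s1 a)) # transpose (s1 a) (s2 a) # ts)"
        using transpositions_on_rewire_Cons[OF assms(2) less.prems a ts(1)] .
      show "foldr (\<circ>) (transpose a (s2 (s1 a)) # transpose (s1 a) (s2 a) # ts) id = s2 \<circ> s1"
        using foldr_comp_rewire ts(2) unfolding s2'_def .
      show "length (transpose a (s2 (s1 a)) # transpose (s1 a) (s2 a) # ts)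
          + 2 * card (reach_classes (involution_graph V s1 s2) V) \<le> card V"
        using ts(3) card_reach_classes_less_rewire[OF assms(2) less.prems a assms(1)]
        unfolding s2'_def by simp
    qed
  qed
qed

theorem Least_transpositions_eq:
  assumes "finite V" "fpf_involution_on V s1" "fpf_involution_on V s2"
  shows "(LEAST k. \<exists>ts. length ts = k \<and> transpositions_on V ts \<and> foldr (\<circ>) ts id = s2 \<circ> s1)
    = card V - 2 * card (reach_classes (involution_graph V s1 s2) V)"
proof (rule Least_equality)
  obtain ts where "transpositions_on V ts" "foldr (\<circ>) ts id = s2 \<circ> s1"
    "length ts + 2 * card (reach_classes (involution_graph V s1 s2) V) \<le> card V"
    using transpositions_upper_bound[OF assms] by blast
  moreover note transpositions_lower_bound[OF assms this(1,2)]
  ultimately show "\<exists>ts. length ts = card V - 2 * card (reach_classes (involution_graph V s1 s2) V)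
      \<and> transpositions_on V ts \<and> foldr (\<circ>) ts id = s2 \<circ> s1"
    by (intro exI[of _ ts]) auto
next
  fix k
  assume "\<exists>ts. length ts = k \<and> transpositions_on V ts \<and> foldr (\<circ>) ts id = s2 \<circ> s1"
  then show "card V - 2 * card (reach_classes (involution_graph V s1 s2) V) \<le> k"
    using transpositions_lower_bound[OF assms] by fastforce
qed

section \<open>Subtrees and the bottom-up ordering\<close>

lemma self_in_subtrees: "t \<in> subtrees t"
  by (cases t) auto

lemma subtrees_trans: "u \<in> subtrees t \<Longrightarrow> subtrees u \<subseteq> subtrees t"
  by (induction t) auto

lemma size_le_of_subtree: "u \<in> subtrees t \<Longrightarrow> size u \<le> size t"
  by (induction t) auto

lemma finite_subtrees: "finite (subtrees t)"
  by (induction t) auto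

lemma leaves_not_Nil: "leaves t \<noteq> []"
  by (induction t) auto

lemma Leaf_in_subtrees_iff: "Leaf a \<in> subtrees t \<longleftrightarrow> a \<in> set (leaves t)"
  by (induction t) auto

lemma leaves_subset_of_subtree: "u \<in> subtrees t \<Longrightarrow> set (leaves u) \<subseteq> set (leaves t)"
  by (induction t) auto

lemma distinct_leaves_of_subtree: "distinct (leaves t) \<Longrightarrow> u \<in> subtrees t \<Longrightarrow> distinct (leaves u)"
  by (induction t) auto

lemma children_subset_subtrees: "u \<in> subtrees t \<Longrightarrow> children u \<subseteq> subtrees t - {t}"
proof -
  assume u: "u \<in> subtrees t"
  have "children u \<subseteq> subtrees u"
    by (cases u) (auto simp: self_in_subtrees)
  moreover have "size w < size t" if "w \<in> children u" for w
    using that size_le_of_subtree[OF u] by (cases u) auto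
  ultimately show ?thesis
    using subtrees_trans[OF u] by auto
qed

lemma Node_notin_subtrees: "Node l r \<notin> subtrees l" "Node l r \<notin> subtrees r"
  using size_le_of_subtree[of "Node l r" l] size_le_of_subtree[of "Node l r" r] by auto

lemma subtrees_disjoint:
  assumes "distinct (leaves (Node l r))"
  shows "subtrees l \<inter> subtrees r = {}"
proof -
  have False if "u \<in> subtrees l" "u \<in> subtrees r" for u
  proof -
    obtain a where "a \<in> set (leaves u)"
      using leaves_not_Nil[of u] by (cases "leaves u") auto
    then show False
      using assms leaves_subset_of_subtree[OF that(1)] leaves_subset_of_subtree[OF that(2)] by auto
  qed
  then show ?thesis
    by auto
qed

lemma card_subtrees: "distinct (leaves t) \<Longrightarrow> card (subtrees t) = 2 * length (leaves t) - 1"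
proof (induction t)
  case (Leaf a)
  then show ?case by simp
next
  case (Node l r)
  have "card (subtrees (Node l r)) = Suc (card (subtrees l) + card (subtrees r))"
    using Node_notin_subtrees[of l r] subtrees_disjoint[OF Node.prems]
    by (simp add: finite_subtrees card_Un_disjoint)
  moreover have "leaves l \<noteq> []" "leaves r \<noteq> []"
    by (rule leaves_not_Nil)+
  ultimately show ?case
    using Node by (simp add: length_greater_0_conv[symmetric] del: length_greater_0_conv)
qed

lemma height_less_of_subtree: "u \<in> subtrees v \<Longrightarrow> u \<noteq> v \<Longrightarrow> height u < height v"
proof (induction v)
  case (Node l r)
  then have "height u \<le> height l \<or> height u \<le> height r"
    by (cases "u = l"; cases "u = r") auto
  then show ?case
    by auto
qed simp

lemma subtrees_nested:
  assumes "distinct (leaves t)" "u \<in> subtrees t" "v \<in> subtrees t"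
    and "a \<in> set (leaves u)" "a \<in> set (leaves v)"
  shows "u \<in> subtrees v \<or> v \<in> subtrees u"
  using assms
proof (induction t)
  case (Node l r)
  have split: "a \<notin> set (leaves l) \<or> a \<notin> set (leaves r)"
    using Node.prems(1) by auto
  consider "u = Node l r" | "v = Node l r" | "u \<in> subtrees l" "v \<in> subtrees l"
    | "u \<in> subtrees r" "v \<in> subtrees r" | "u \<in> subtrees l" "v \<in> subtrees r"
    | "u \<in> subtrees r" "v \<in> subtrees l"
    using Node.prems(2,3) by auto
  then show ?case
  proof cases
    case 3
    then show ?thesis
      using Node.IH(1) Node.prems(1,4,5) by simp
  next
    case 4
    then show ?thesis
      using Node.IH(2) Node.prems(1,4,5) by simp
  next
    case 5
    then show ?thesis
      using split Node.prems(4,5) leaves_subset_of_subtree by blast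
  next
    case 6
    then show ?thesis
      using split Node.prems(4,5) leaves_subset_of_subtree by blast
  qed (use Node.prems(2,3) in auto)
qed simp

lemma children_disjoint:
  assumes "distinct (leaves t)" "u \<in> subtrees t" "v \<in> subtrees t" "u \<noteq> v"
  shows "children u \<inter> children v = {}"
  using assms
proof (induction t arbitrary: u v)
  case (Node l r)
  have disjoint: "subtrees l \<inter> subtrees r = {}"
    by (rule subtrees_disjoint[OF Node.prems(1)])
  have root: "children (Node l r) \<inter> children w = {}" if "w \<in> subtrees l \<union> subtrees r" for w
    using that disjoint children_subset_subtrees[of w l] children_subset_subtrees[of w r]
      self_in_subtrees[of l] self_in_subtrees[of r] by auto
  consider "u = Node l r" | "v = Node l r" | "u \<in> subtrees l" "v \<in> subtrees l"
    | "u \<in> subtrees r" "v \<in> subtrees r" | "u \<in> subtrees l" "v \<in> subtrees r"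
    | "u \<in> subtrees r" "v \<in> subtrees l"
    using Node.prems(2,3) by auto
  then show ?case
  proof cases
    case 1
    then show ?thesis
      using root Node.prems(3,4) by simp
  next
    case 2
    then show ?thesis
      using root[of u] Node.prems(2,4) by (auto simp: Int_commute)
  next
    case 3
    then show ?thesis
      using Node.IH(1) Node.prems(1,4) by simp
  next
    case 4
    then show ?thesis
      using Node.IH(2) Node.prems(1,4) by simp
  next
    case 5
    then show ?thesis
      using disjoint children_subset_subtrees[of u l] children_subset_subtrees[of v r] by blast
  next
    case 6
    then show ?thesis
      using disjoint children_subset_subtrees[of u r] children_subset_subtrees[of v l] by blast
  qed
qed simp

lemma UN_children: "(\<Union>u\<in>subtrees t. children u) = subtrees t - {t}"
proof (induction t)
  case (Node l r)
  have "(\<Union>u\<in>subtrees (Node l r). children u) = {l, r} \<union> (subtrees l - {l}) \<union> (subtrees r - {r})"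
    using Node.IH by auto
  also have "\<dots> = subtrees (Node l r) - {Node l r}"
    using self_in_subtrees[of l] self_in_subtrees[of r] Node_notin_subtrees[of l r] by auto
  finally show ?case .
qed simp

text \<open>
  For trees with distinct leaves, the bottom-up ordering is the lexicographic order of these
  keys; this gives its existence and uniqueness.
\<close>

fun bu_key :: "btree \<Rightarrow> nat list" where
  "bu_key (Leaf a) = [0, a]"
| "bu_key (Node l r) = height (Node l r) # min (bu_key l) (bu_key r)"

lemma bu_key_eq_height_Cons: "bu_key u = height u # tl (bu_key u)"
  by (cases u) auto

lemma last_bu_key_in_leaves: "last (bu_key u) \<in> set (leaves u)"
proof (induction u)
  case (Node l r)
  have "bu_key l \<noteq> []" "bu_key r \<noteq> []"
    by (metis bu_key_eq_height_Cons list.distinct(1))+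
  then show ?case
    using Node by (auto simp: min_def)
qed simp

lemma bu_key_less_of_height_less: "height u < height v \<Longrightarrow> bu_key u < bu_key v"
  by (metis bu_key_eq_height_Cons Cons_less_Cons)

lemma height_le_of_bu_key_less: "bu_key u < bu_key v \<Longrightarrow> height u \<le> height v"
  by (metis bu_key_eq_height_Cons Cons_less_Cons less_imp_le order.refl)

lemma inj_on_bu_key:
  assumes "distinct (leaves t)"
  shows "inj_on bu_key (subtrees t)"
proof (rule inj_onI)
  fix u v
  assume uv: "u \<in> subtrees t" "v \<in> subtrees t" "bu_key u = bu_key v"
  then have "height u = height v"
    by (metis bu_key_eq_height_Cons list.inject)
  moreover have "u \<in> subtrees v \<or> v \<in> subtrees u"
    using subtrees_nested[OF assms uv(1,2) last_bu_key_in_leaves] last_bu_key_in_leaves uv(3)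
    by metis
  ultimately show "u = v"
    using height_less_of_subtree by fastforce
qed

definition key_monotone :: "btree set \<Rightarrow> (btree \<Rightarrow> nat) \<Rightarrow> bool" where
  "key_monotone X lab \<longleftrightarrow> (\<forall>x\<in>X. \<forall>y\<in>X. bu_key x < bu_key y \<longrightarrow> lab x < lab y)"

lemma key_monotone_less_iff:
  assumes "key_monotone X lab" "inj_on bu_key X" "x \<in> X" "y \<in> X"
  shows "lab x < lab y \<longleftrightarrow> bu_key x < bu_key y"
  using assms unfolding key_monotone_def inj_on_def
  by (metis less_asym neqE)

lemma inj_on_of_key_monotone:
  assumes "key_monotone X lab" "inj_on bu_key X"
  shows "inj_on lab X"
  using key_monotone_less_iff[OF assms] assms(2) unfolding inj_on_def
  by (metis less_irrefl neqE)

lemma min_less_min_iff: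
  fixes f :: "'a \<Rightarrow> 'b::linorder" and g :: "'a \<Rightarrow> 'c::linorder"
  assumes "\<And>x y. x \<in> X \<Longrightarrow> y \<in> X \<Longrightarrow> f x < f y \<longleftrightarrow> g x < g y" "{l, r, l', r'} \<subseteq> X"
  shows "min (f l) (f r) < min (f l') (f r') \<longleftrightarrow> min (g l) (g r) < min (g l') (g r')"
  using assms by (simp add: min_less_iff_disj)

lemma Min_children_less_iff:
  assumes "key_monotone X lab" "inj_on bu_key X" "{l, r, l', r'} \<subseteq> X"
    and "height (Node l r) = height (Node l' r')"
  shows "Min (lab ` children (Node l r)) < Min (lab ` children (Node l' r'))
    \<longleftrightarrow> bu_key (Node l r) < bu_key (Node l' r')"
proof -
  have "Min (lab ` children (Node l r)) < Min (lab ` children (Node l' r'))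
      \<longleftrightarrow> min (bu_key l) (bu_key r) < min (bu_key l') (bu_key r')"
    using min_less_min_iff[of X lab bu_key, OF key_monotone_less_iff[OF assms(1,2)] assms(3)]
    by simp
  also have "\<dots> \<longleftrightarrow> bu_key (Node l r) < bu_key (Node l' r')"
    using assms(4) by (simp del: height.simps)
  finally show ?thesis .
qed

definition bu_rank :: "btree \<Rightarrow> btree \<Rightarrow> nat" where
  "bu_rank T u = (if u \<in> subtrees T then Suc (card {w \<in> subtrees T. bu_key w < bu_key u}) else 0)"

lemma key_monotone_bu_rank: "key_monotone (subtrees T) (bu_rank T)"
  unfolding key_monotone_def
proof (intro ballI impI)
  fix x y
  assume "x \<in> subtrees T" "y \<in> subtrees T" "bu_key x < bu_key y"
  then have "{w \<in> subtrees T. bu_key w < bu_key x} \<subset> {w \<in> subtrees T. bu_key w < bu_key y}"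
    by auto
  then show "bu_rank T x < bu_rank T y"
    using \<open>x \<in> subtrees T\<close> \<open>y \<in> subtrees T\<close>
    unfolding bu_rank_def by (simp add: finite_subtrees psubset_card_mono)
qed

lemma bu_rank_Leaf:
  assumes "binary_phylo n T" "Leaf a \<in> subtrees T"
  shows "bu_rank T (Leaf a) = a"
proof -
  have leaves: "set (leaves T) = {1..n}"
    using assms(1) unfolding binary_phylo_def by simp
  have a: "a \<in> {1..n}"
    using assms(2) leaves Leaf_in_subtrees_iff by auto
  have "{w \<in> subtrees T. bu_key w < bu_key (Leaf a)} = Leaf ` {1..<a}"
  proof
    show "{w \<in> subtrees T. bu_key w < bu_key (Leaf a)} \<subseteq> Leaf ` {1..<a}"
    proof
      fix w
      assume w: "w \<in> {w \<in> subtrees T. bu_key w < bu_key (Leaf a)}"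
      then have "height w = 0"
        using height_le_of_bu_key_less[of w "Leaf a"] by simp
      then obtain b where b: "w = Leaf b"
        by (cases w) auto
      then show "w \<in> Leaf ` {1..<a}"
        using w leaves Leaf_in_subtrees_iff by auto
    qed
    show "Leaf ` {1..<a} \<subseteq> {w \<in> subtrees T. bu_key w < bu_key (Leaf a)}"
      using a leaves Leaf_in_subtrees_iff by auto
  qed
  moreover have "card (Leaf ` {1..<a}) = a - 1"
    by (simp add: card_image inj_on_def)
  ultimately show ?thesis
    using assms(2) a unfolding bu_rank_def by simp
qed

lemma is_bottom_up_bu_rank:
  assumes "binary_phylo n T"
  shows "is_bottom_up T (bu_rank T)"
proof -
  let ?S = "subtrees T"
  have key_inj: "inj_on bu_key ?S"
    using assms inj_on_bu_key unfolding binary_phylo_def by blast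
  note less_iff = key_monotone_less_iff[OF key_monotone_bu_rank key_inj]
  have "bu_rank T ` ?S \<subseteq> {1..card ?S}"
  proof
    fix k
    assume "k \<in> bu_rank T ` ?S"
    then obtain u where u: "u \<in> ?S" "k = bu_rank T u"
      by blast
    then have "{w \<in> ?S. bu_key w < bu_key u} \<subset> ?S"
      by auto
    then show "k \<in> {1..card ?S}"
      using u unfolding bu_rank_def by (simp add: finite_subtrees psubset_card_mono Suc_leI)
  qed
  moreover have "bu_rank T u < bu_rank T v"
    if u: "u \<in> ?S" and v: "v \<in> ?S" and h: "0 < height u" "height u = height v"
      and lt: "Min (bu_rank T ` children u) < Min (bu_rank T ` children v)" for u v
  proof -
    obtain l r l' r' where lr: "u = Node l r" "v = Node l' r'"
      using h by (cases u; cases v) auto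
    then have "{l, r, l', r'} \<subseteq> ?S"
      using children_subset_subtrees[OF u] children_subset_subtrees[OF v] by auto
    then have "bu_key u < bu_key v"
      using lt h(2) lr Min_children_less_iff[OF key_monotone_bu_rank key_inj] by simp
    then show ?thesis
      using less_iff u v by blast
  qed
  ultimately show ?thesis
    unfolding is_bottom_up_def
    using inj_on_of_key_monotone[OF key_monotone_bu_rank key_inj] bu_rank_Leaf[OF assms]
      less_iff bu_key_less_of_height_less
    by (auto simp: bu_rank_def)
qed

lemma is_bottom_up_less_of_key_monotone_children:
  assumes "distinct (leaves T)" "is_bottom_up T lab" "u \<in> subtrees T" "v \<in> subtrees T"
    and "0 < height u" "height u = height v" "bu_key u < bu_key v"
    and "key_monotone (children u \<union> children v) lab"
  shows "lab u < lab v"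
proof -
  obtain l r l' r' where lr: "u = Node l r" "v = Node l' r'"
    using assms(5,6) by (cases u; cases v) auto
  have "children u \<union> children v \<subseteq> subtrees T"
    using children_subset_subtrees[OF assms(3)] children_subset_subtrees[OF assms(4)] by auto
  then have "inj_on bu_key {l, r, l', r'}"
    using lr by (intro inj_on_subset[OF inj_on_bu_key[OF assms(1)]]) auto
  then have "Min (lab ` children u) < Min (lab ` children v) \<longleftrightarrow> bu_key u < bu_key v"
    using assms(8) assms(6)[unfolded lr] unfolding lr
    by (intro Min_children_less_iff[OF _ _ subset_refl]) (simp_all add: insert_commute)
  then show ?thesis
    using assms(2-7) unfolding is_bottom_up_def by auto
qed

lemma key_monotone_of_is_bottom_up:
  assumes "distinct (leaves T)" "is_bottom_up T lab"
  shows "key_monotone (subtrees T) lab"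
proof -
  let ?S = "subtrees T"
  have "lab u < lab v" if "u \<in> ?S" "v \<in> ?S" "bu_key u < bu_key v" for u v
    using that
  proof (induction "height u + height v" arbitrary: u v rule: less_induct)
    case less
    have "height u \<le> height v"
      using height_le_of_bu_key_less[OF less.prems(3)] .
    then consider "height u < height v" | "height u = height v" "height u = 0"
      | "height u = height v" "0 < height u"
      by linarith
    then show ?case
    proof cases
      case 1
      then show ?thesis
        using assms(2) less.prems(1,2) unfolding is_bottom_up_def by blast
    next
      case 2
      then obtain a b where "u = Leaf a" "v = Leaf b"
        by (cases u; cases v) auto
      then show ?thesis
        using assms(2) less.prems unfolding is_bottom_up_def by simp
    next
      case 3
      let ?X = "children u \<union> children v"
      have lower: "height x < height u" "x \<in> ?S" if "x \<in> ?X" for x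
        using that 3 children_subset_subtrees[OF less.prems(1)]
          children_subset_subtrees[OF less.prems(2)]
        by (cases u; cases v; auto)+
      have "key_monotone ?X lab"
        unfolding key_monotone_def
      proof (intro ballI impI)
        fix x y
        assume "x \<in> ?X" "y \<in> ?X" "bu_key x < bu_key y"
        moreover have "height x + height y < height u + height v"
          using lower(1)[OF \<open>x \<in> ?X\<close>] lower(1)[OF \<open>y \<in> ?X\<close>] 3(1) by linarith
        ultimately show "lab x < lab y"
          using less.hyps lower(2) by blast
      qed
      then show ?thesis
        by (rule is_bottom_up_less_of_key_monotone_children[OF assms less.prems(1,2) 3(2,1)
              less.prems(3)])
    qed
  qed
  then show ?thesis
    unfolding key_monotone_def by blast
qed

lemma image_of_is_bottom_up:
  assumes "is_bottom_up T lab"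
  shows "lab ` subtrees T = {1..card (subtrees T)}"
proof -
  have "inj_on lab (subtrees T)" and sub: "lab ` subtrees T \<subseteq> {1..card (subtrees T)}"
    using assms unfolding is_bottom_up_def by auto
  then have "card (lab ` subtrees T) = card {1..card (subtrees T)}"
    by (simp add: card_image)
  then show ?thesis
    using card_subset_eq[OF finite_atLeastAtMost sub] by simp
qed

lemma Suc_card_less_eq:
  fixes f :: "'a \<Rightarrow> nat"
  assumes "bij_betw f S {1..card S}" "u \<in> S"
  shows "Suc (card {w \<in> S. f w < f u}) = f u"
proof -
  have image: "f ` S = {1..card S}" and inj: "inj_on f S"
    using assms(1) unfolding bij_betw_def by auto
  then have u: "1 \<le> f u" "f u \<le> card S"
    using assms(2) by auto
  have "f ` {w \<in> S. f w < f u} = {k \<in> f ` S. k < f u}"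
    by auto
  also have "\<dots> = {1..<f u}"
    unfolding image using u by auto
  finally have "card {w \<in> S. f w < f u} = f u - 1"
    using card_image inj_on_subset[OF inj] by (metis (no_types, lifting) card_atLeastLessThan
        mem_Collect_eq subsetI)
  then show ?thesis
    using u by simp
qed

lemma is_bottom_up_unique:
  assumes "binary_phylo n T" "is_bottom_up T lab"
  shows "lab = bu_rank T"
proof
  fix u
  let ?S = "subtrees T"
  have key_inj: "inj_on bu_key ?S"
    using assms(1) inj_on_bu_key unfolding binary_phylo_def by blast
  have mono: "key_monotone ?S lab"
    using assms key_monotone_of_is_bottom_up unfolding binary_phylo_def by blast
  have bij: "bij_betw lab ?S {1..card ?S}"
    using assms(2) image_of_is_bottom_up unfolding bij_betw_def is_bottom_up_def by blast
  show "lab u = bu_rank T u"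
  proof (cases "u \<in> ?S")
    case True
    have "{w \<in> ?S. lab w < lab u} = {w \<in> ?S. bu_key w < bu_key u}"
      using key_monotone_less_iff[OF mono key_inj _ True] by blast
    then show ?thesis
      using Suc_card_less_eq[OF bij True] True unfolding bu_rank_def by simp
  next
    case False
    then show ?thesis
      using assms(2) unfolding is_bottom_up_def bu_rank_def by simp
  qed
qed

lemma is_bottom_up_bottom_up:
  assumes "binary_phylo n T"
  shows "is_bottom_up T (bottom_up T)"
proof -
  have "\<exists>!lab. is_bottom_up T lab"
    using is_bottom_up_bu_rank[OF assms] is_bottom_up_unique[OF assms] by blast
  then show ?thesis
    unfolding bottom_up_def by (rule theI')
qed

section \<open>Matchings and matching permutations\<close>

lemma card_subtrees_binary_phylo: "binary_phylo n T \<Longrightarrow> card (subtrees T) = 2 * n - 1"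
  unfolding binary_phylo_def by (simp add: card_subtrees distinct_card[symmetric])

lemma bottom_up_root:
  assumes "binary_phylo n T"
  shows "bottom_up T T = card (subtrees T)"
proof -
  let ?lab = "bottom_up T" and ?S = "subtrees T"
  have bu: "is_bottom_up T ?lab"
    by (rule is_bottom_up_bottom_up[OF assms])
  have image: "?lab ` ?S = {1..card ?S}"
    by (rule image_of_is_bottom_up[OF bu])
  have "card ?S \<in> ?lab ` ?S"
    unfolding image using self_in_subtrees[of T] finite_subtrees[of T]
    by (auto simp: Suc_le_eq card_gt_0_iff)
  then obtain w where w: "w \<in> ?S" "?lab w = card ?S"
    by auto
  have "?lab w < ?lab T" if "w \<noteq> T"
    using bu w(1) self_in_subtrees height_less_of_subtree[OF w(1) that]
    unfolding is_bottom_up_def by blast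
  moreover have "?lab T \<in> ?lab ` ?S"
    using self_in_subtrees by (rule imageI)
  then have "?lab T \<le> card ?S"
    unfolding image by simp
  ultimately show ?thesis
    using w by force
qed

lemma matching_eq_image:
  "matching T = (\<lambda>u. bottom_up T ` children u) ` {u \<in> subtrees T. \<not> is_leaf u}"
  unfolding matching_def by blast

lemma finite_matching: "finite (matching T)"
  unfolding matching_eq_image by (simp add: finite_subtrees)

lemma matching_doubleton:
  assumes "binary_phylo n T" "e \<in> matching T"
  shows "\<exists>x y. x \<noteq> y \<and> e = {x, y}"
proof -
  obtain u where u: "u \<in> subtrees T" "\<not> is_leaf u" "e = bottom_up T ` children u"
    using assms(2) unfolding matching_eq_image by blast
  then obtain l r where lr: "u = Node l r"
    by (cases u) auto
  have "distinct (leaves u)"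
    using assms(1) u(1) distinct_leaves_of_subtree unfolding binary_phylo_def by blast
  then have "l \<noteq> r"
    using subtrees_disjoint[of l r] self_in_subtrees[of l] lr by auto
  moreover have "l \<in> subtrees T" "r \<in> subtrees T"
    using children_subset_subtrees[OF u(1)] lr by auto
  ultimately have "bottom_up T l \<noteq> bottom_up T r"
    using is_bottom_up_bottom_up[OF assms(1)] unfolding is_bottom_up_def inj_on_def by blast
  then show ?thesis
    using u(3) lr by auto
qed

lemma pairwise_disjnt_matching:
  assumes "binary_phylo n T"
  shows "pairwise disjnt (matching T)"
proof (rule pairwiseI)
  fix e1 e2
  assume "e1 \<in> matching T" "e2 \<in> matching T" "e1 \<noteq> e2"
  then obtain u1 u2 where u: "u1 \<in> subtrees T" "u2 \<in> subtrees T" "u1 \<noteq> u2"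
    "e1 = bottom_up T ` children u1" "e2 = bottom_up T ` children u2"
    unfolding matching_eq_image by blast
  have "inj_on (bottom_up T) (subtrees T)"
    using is_bottom_up_bottom_up[OF assms] unfolding is_bottom_up_def by blast
  moreover have "children u1 \<inter> children u2 = {}"
    using assms u(1-3) children_disjoint unfolding binary_phylo_def by blast
  ultimately show "disjnt e1 e2"
    unfolding disjnt_def u(4,5)
    using inj_on_image_Int children_subset_subtrees[OF u(1)] children_subset_subtrees[OF u(2)]
    by (metis Diff_subset image_empty subset_trans)
qed

lemma Union_matching:
  assumes "binary_phylo n T"
  shows "\<Union>(matching T) = {1..2 * n - 2}"
proof -
  let ?lab = "bottom_up T" and ?S = "subtrees T"
  have bu: "is_bottom_up T ?lab"
    by (rule is_bottom_up_bottom_up[OF assms])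
  have "\<Union>(matching T) = ?lab ` (\<Union>u\<in>?S. children u)"
    unfolding matching_eq_image by (force elim: is_leaf.elims)
  also have "\<dots> = ?lab ` ?S - ?lab ` {T}"
    unfolding UN_children using bu self_in_subtrees[of T]
    by (intro inj_on_image_set_diff) (auto simp: is_bottom_up_def)
  also have "\<dots> = {1..2 * n - 2}"
    unfolding image_of_is_bottom_up[OF bu] using bottom_up_root[OF assms]
      card_subtrees_binary_phylo[OF assms] by auto
  finally show ?thesis .
qed

lemma kappa_doubleton: "a \<noteq> b \<Longrightarrow> kappa {a, b} = transpose a b"
  by (cases "a < b")
    (auto simp: kappa_def sorted_list_of_set_insert insert_commute transpose_commute)

lemma transpose_comp_commute:
  "{a, b} \<inter> {c, d} = {} \<Longrightarrow> transpose a b \<circ> transpose c d = transpose c d \<circ> transpose a b"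
  by (auto simp: fun_eq_iff transpose_def)

lemma comp_fun_commute_on_kappa:
  assumes "\<forall>e\<in>M. \<exists>x y. x \<noteq> y \<and> e = {x, y}" "pairwise disjnt M"
  shows "comp_fun_commute_on M (\<lambda>S p. kappa S \<circ> p)"
proof
  fix e1 e2
  assume e: "e1 \<in> M" "e2 \<in> M"
  then obtain a b c d where "a \<noteq> b" "e1 = {a, b}" "c \<noteq> d" "e2 = {c, d}"
    using assms(1) by metis
  moreover have "e1 = e2 \<or> disjnt e1 e2"
    using assms(2) e unfolding pairwise_def by blast
  ultimately have "kappa e2 \<circ> kappa e1 = kappa e1 \<circ> kappa e2"
    using kappa_doubleton transpose_comp_commute unfolding disjnt_def by metis
  then show "(\<circ>) (kappa e2) \<circ> (\<circ>) (kappa e1) = (\<circ>) (kappa e1) \<circ> (\<circ>) (kappa e2)"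
    by (simp add: fun_eq_iff)
qed

lemma fold_kappa_disjoint_doubletons:
  assumes "finite M" "\<forall>e\<in>M. \<exists>x y. x \<noteq> y \<and> e = {x, y}" "pairwise disjnt M"
  shows "(\<forall>x y. {x, y} \<in> M \<longrightarrow> Finite_Set.fold (\<lambda>S p. kappa S \<circ> p) id M x = y) \<and>
    (\<forall>x. x \<notin> \<Union>M \<longrightarrow> Finite_Set.fold (\<lambda>S p. kappa S \<circ> p) id M x = x)"
  using assms
proof (induction M rule: finite_induct)
  case (insert e N)
  let ?f = "\<lambda>S p. kappa S \<circ> p"
  have fold: "Finite_Set.fold ?f id (insert e N) = kappa e \<circ> Finite_Set.fold ?f id N"
    using comp_fun_commute_on.fold_insert[OF comp_fun_commute_on_kappa[OF insert.prems]
        subset_refl insert.hyps] .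
  obtain a b where ab: "a \<noteq> b" "e = {a, b}"
    using bspec[OF insert.prems(1) insertI1] by blast
  have disjoint: "disjnt e e'" if "e' \<in> N" for e'
    using insert.prems(2) insert.hyps(2) that by (metis insertCI pairwiseD)
  have "\<forall>e\<in>N. \<exists>x y. x \<noteq> y \<and> e = {x, y}"
    using insert.prems(1) by (meson insertI2)
  moreover have "pairwise disjnt N"
    using insert.prems(2) by (rule pairwise_subset) auto
  ultimately have IH: "\<And>x y. {x, y} \<in> N \<Longrightarrow> Finite_Set.fold ?f id N x = y"
    "\<And>x. x \<notin> \<Union>N \<Longrightarrow> Finite_Set.fold ?f id N x = x"
    using insert.IH by blast+
  have kappa_e: "kappa e = transpose a b"
    using kappa_doubleton[OF ab(1)] ab(2) by simp
  have "Finite_Set.fold ?f id (insert e N) x = y" if xy: "{x, y} \<in> insert e N" for x y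
  proof (cases "{x, y} = e")
    case True
    then have "x \<notin> \<Union>N"
      using disjoint unfolding disjnt_def by blast
    moreover have "transpose a b x = y"
      using True ab by (auto simp: doubleton_eq_iff)
    ultimately show ?thesis
      using IH(2) by (simp add: fold kappa_e)
  next
    case False
    then have xy_N: "{x, y} \<in> N"
      using xy by blast
    then have "y \<notin> {a, b}"
      using disjoint ab(2) unfolding disjnt_def by blast
    then show ?thesis
      using IH(1)[OF xy_N] by (simp add: fold kappa_e)
  qed
  moreover have "Finite_Set.fold ?f id (insert e N) x = x" if "x \<notin> \<Union>(insert e N)" for x
  proof -
    have "x \<notin> \<Union>N" "transpose a b x = x"
      using that ab(2) by auto
    then show ?thesis
      using IH(2) by (simp add: fold kappa_e)
  qed
  ultimately show ?case
    by blast
qed simp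

lemma matching_perm_apply:
  assumes "binary_phylo n T"
  shows "{x, y} \<in> matching T \<Longrightarrow> matching_perm T x = y"
    and "x \<notin> {1..2 * n - 2} \<Longrightarrow> matching_perm T x = x"
  using fold_kappa_disjoint_doubletons[OF finite_matching _ pairwise_disjnt_matching[OF assms]]
    matching_doubleton[OF assms] Union_matching[OF assms]
  unfolding matching_perm_def by blast+

lemma matching_perm_partner:
  assumes "binary_phylo n T" "x \<in> {1..2 * n - 2}"
  shows "x \<noteq> matching_perm T x \<and> {x, matching_perm T x} \<in> matching T"
proof -
  obtain e where e: "e \<in> matching T" "x \<in> e"
    using assms(2) Union_matching[OF assms(1)] by blast
  then obtain y where "x \<noteq> y" "e = {x, y}"
    using matching_doubleton[OF assms(1)] by (metis insert_commute insertE singletonD)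
  then show ?thesis
    using e matching_perm_apply(1)[OF assms(1)] by auto
qed

lemma fpf_involution_on_matching_perm:
  assumes "binary_phylo n T"
  shows "fpf_involution_on {1..2 * n - 2} (matching_perm T)"
proof -
  let ?s = "matching_perm T" and ?V = "{1..2 * n - 2}"
  have partner: "?s (?s x) = x \<and> ?s x \<in> ?V" if "x \<in> ?V" for x
  proof -
    have "{x, ?s x} \<in> matching T"
      using matching_perm_partner[OF assms that] by blast
    then show ?thesis
      using matching_perm_apply(1)[OF assms, of "?s x" x] Union_matching[OF assms]
      by (auto simp: insert_commute)
  qed
  show ?thesis
    unfolding fpf_involution_on_def
    using partner matching_perm_partner[OF assms] matching_perm_apply(2)[OF assms] by metis
qed

lemma mem_matching_eq_matching_perm:
  assumes "binary_phylo n T" "e \<in> matching T" "x \<in> e" "y \<in> e"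
  shows "y = x \<or> y = matching_perm T x"
  using assms matching_doubleton[OF assms(1,2)] matching_perm_apply(1)[OF assms(1)]
  by (metis insert_commute insert_iff singletonD)

lemma rtrancl_graph_edges:
  assumes "binary_phylo n T1" "binary_phylo n T2"
  shows "(graph_edges T1 T2)\<^sup>* =
    (involution_graph {1..2 * n - 2} (matching_perm T1) (matching_perm T2))\<^sup>*"
proof -
  let ?G = "involution_graph {1..2 * n - 2} (matching_perm T1) (matching_perm T2)"
  have "?G \<subseteq> graph_edges T1 T2"
    using matching_perm_partner[OF assms(1)] matching_perm_partner[OF assms(2)]
    unfolding involution_graph_def graph_edges_def by blast
  moreover have "graph_edges T1 T2 \<subseteq> ?G\<^sup>="
    using mem_matching_eq_matching_perm[OF assms(1)] mem_matching_eq_matching_perm[OF assms(2)]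
      Union_matching[OF assms(1)] Union_matching[OF assms(2)]
    unfolding involution_graph_def graph_edges_def by blast
  ultimately show ?thesis
    by (metis rtrancl_mono rtrancl_reflcl subset_antisym)
qed

lemma inv_matching_perm: "binary_phylo n T \<Longrightarrow> inv (matching_perm T) = matching_perm T"
  using fpf_involution_onD(1)[OF fpf_involution_on_matching_perm] by (blast intro: inv_equality)

theorem proposition5:
  fixes n :: nat and T1 T2 :: btree
  assumes "binary_phylo n T1" and "binary_phylo n T2"
  shows "TD n T1 T2 = real n - 1 - real (card (components n T1 T2))"
proof -
  let ?V = "{1..2 * n - 2}"
  let ?G = "involution_graph ?V (matching_perm T1) (matching_perm T2)"
  note s1 = fpf_involution_on_matching_perm[OF assms(1)]
    and s2 = fpf_involution_on_matching_perm[OF assms(2)]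
  have components: "components n T1 T2 = reach_classes ?G ?V"
    unfolding components_def reach_classes_def rtrancl_graph_edges[OF assms] ..
  have "TD' n T1 T2 = card ?V - 2 * card (reach_classes ?G ?V)"
    unfolding TD'_def inv_matching_perm[OF assms(2)]
    using Least_transpositions_eq[OF finite_atLeastAtMost s1 s2]
    unfolding transpositions_on_def by simp
  moreover have "2 * card (reach_classes ?G ?V) \<le> card ?V"
    by (rule two_mul_card_reach_classes_involution_graph_le[OF finite_atLeastAtMost s1 s2])
  moreover have "n \<ge> 1"
    using assms(1) leaves_not_Nil[of T1] unfolding binary_phylo_def
    by (metis atLeastAtMost_iff empty_iff le_trans list.set_sel(1))
  ultimately show ?thesis
    unfolding TD_def components by (simp add: of_nat_diff)
qed

end
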